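(* Let $X$ be a standard one-dimensional Brownian motion starting at $0$ on $(\Omega,\mathcal{F},\mathbb{P})$, $p$ the atomic proposition with $X(\omega),t\models p$ iff $X_t(\omega)\geq1$, $\tau_p(\omega):=\inf\{t\geq0 : X_t(\omega)\geq1\}$, and $\phi_1:=\Box_{(1,2)}(\Diamond_{(1,4)}p\wedge\lnot\Diamond_{(1,3)}p)$, $\phi_2:=(\Diamond_{(1,3)}\phi_1)\wedge(\lnot\Diamond_{(1,2)}\phi_1)\wedge(\lnot\Diamond_{(2,3)}\phi_1)$, $\phi_3:=\Diamond_{(1,2)}\phi_2$, $\psi:=(\lnot p)\wedge(\lnot\Diamond_{(0,8)}p)\wedge\phi_3$. Then almost surely, $X(\omega),0\models\psi$ holds if and only if $\tau_p(\omega)\in(8,9)$. In particular $\mathbb{P}(\omega : X(\omega),0\models\psi)>0$.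
   Context: Continuous semantics: $\lnot,\wedge$ classical; $X(\omega),t\models\Diamond_I\phi$ iff $\exists s\in I$ with $X(\omega),t+s\models\phi$; $X(\omega),t\models\Box_I\phi$ iff $\forall s\in I$, $X(\omega),t+s\models\phi$. *)

theory Defs
  imports "HOL-Probability.Probability"
begin

definition std_brownian_motion :: "'w measure \<Rightarrow> (real \<Rightarrow> 'w \<Rightarrow> real) \<Rightarrow> bool" where
  "std_brownian_motion M X \<longleftrightarrow>
     prob_space M \<and>
     (\<forall>t\<ge>0. X t \<in> borel_measurable M) \<and>
     (\<forall>\<omega>\<in>space M. X 0 \<omega> = 0) \<and>
     (\<forall>\<omega>\<in>space M. continuous_on {0..} (\<lambda>t. X t \<omega>)) \<and>
     (\<forall>s t. 0 \<le> s \<and> s < t \<longrightarrow>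
        distributed M lborel (\<lambda>\<omega>. X t \<omega> - X s \<omega>)
          (\<lambda>x. ennreal (normal_density 0 (sqrt (t - s)) x))) \<and>
     (\<forall>(ts :: nat \<Rightarrow> real) n. 0 \<le> ts 0 \<and> strict_mono ts \<longrightarrow>
        prob_space.indep_vars M (\<lambda>_. borel) (\<lambda>i \<omega>. X (ts (Suc i)) \<omega> - X (ts i) \<omega>) {..<n})"

datatype 'a mtl =
    Atom 'a
  | Neg "'a mtl"
  | Conj "'a mtl" "'a mtl"
  | Dia "real set" "'a mtl"
  | Bx "real set" "'a mtl"

fun sat :: "('a \<Rightarrow> (real \<Rightarrow> real) \<Rightarrow> real \<Rightarrow> bool) \<Rightarrow> (real \<Rightarrow> real) \<Rightarrow> real \<Rightarrow> 'a mtl \<Rightarrow> bool" where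
  "sat L x t (Atom a) = L a x t"
| "sat L x t (Neg \<phi>) = (\<not> sat L x t \<phi>)"
| "sat L x t (Conj \<phi> \<psi>) = (sat L x t \<phi> \<and> sat L x t \<psi>)"
| "sat L x t (Dia I \<phi>) = (\<exists>s\<in>I. sat L x (t + s) \<phi>)"
| "sat L x t (Bx I \<phi>) = (\<forall>s\<in>I. sat L x (t + s) \<phi>)"

definition L_p :: "unit \<Rightarrow> (real \<Rightarrow> real) \<Rightarrow> real \<Rightarrow> bool" where
  "L_p a x t \<longleftrightarrow> x t \<ge> 1"

definition p :: "unit mtl" where "p = Atom ()"

definition phi1 :: "unit mtl" where
  "phi1 = Bx {1<..<2} (Conj (Dia {1<..<4} p) (Neg (Dia {1<..<3} p)))"
definition phi2 :: "unit mtl" where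
  "phi2 = Conj (Dia {1<..<3} phi1) (Conj (Neg (Dia {1<..<2} phi1)) (Neg (Dia {2<..<3} phi1)))"
definition phi3 :: "unit mtl" where
  "phi3 = Dia {1<..<2} phi2"
definition psi :: "unit mtl" where
  "psi = Conj (Neg p) (Conj (Neg (Dia {0<..<8} p)) phi3)"

text \<open>Hitting time of level 1, with inf of the empty set = +oo.\<close>
definition hit_time :: "(real \<Rightarrow> real) \<Rightarrow> ereal" where
  "hit_time x = Inf {ereal t | t. t \<ge> 0 \<and> x t \<ge> 1}"

end

theory Submission
  imports Defs
begin

text \<open>
  Unfolding the formula: \<open>phi1\<close> holds at \<open>T\<close> iff the path is below 1 on \<open>(T + 2, T + 5)\<close> and at
  least 1 at \<open>T + 5\<close>, and \<open>phi2\<close> at a time \<open>s \<in> (1, 2)\<close> forces \<open>phi1\<close> to hold exactly at \<open>s + 2\<close>.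
  Hence \<open>psi\<close> holds at 0 iff the path reaches 1 for the first time at some time in \<open>(8, 9)\<close>, which
  for a continuous path means \<open>hit_time \<in> (8, 9)\<close>; the equivalence therefore holds for every path.

  For positivity, choose \<open>k\<close> such that with probability \<open>> 3/4\<close> the path moves by at most \<open>1/2\<close>
  between dyadic points of \<open>[0, 8]\<close> at distance \<open>\<le> 8 / 2^k\<close>. Split \<open>[0, 8]\<close> into \<open>2^k\<close> blocks and
  ask on each block that the path stays within \<open>1/2\<close> of its starting value and ends no higher than
  it started; each such event has probability \<open>\<ge> 1/2 - 1/4\<close>. By independent increments these
  events and a large rise of the path on \<open>[8, 8.5]\<close> occur together with positive probability, and
  then the path stays below \<open>1/2\<close> on \<open>[0, 8]\<close> and is above 1 at time \<open>8.5\<close>. Independence is only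
  available for finitely many increments, so the block events are first imposed on the dyadic
  points of level \<open>k + d\<close> and the bound is passed to the limit \<open>d \<rightarrow> \<infinity>\<close>.
\<close>

section \<open>The formula and the hitting time\<close>

lemma hit_time_eqI:
  assumes "0 \<le> v" "1 \<le> x v" "\<forall>t\<in>{0..<v}. x t < 1"
  shows "hit_time x = ereal v"
  unfolding hit_time_def
proof (rule antisym)
  show "Inf {ereal t |t. 0 \<le> t \<and> 1 \<le> x t} \<le> ereal v"
    using assms by (blast intro: Inf_lower)
  have "v \<le> t" if "0 \<le> t" "1 \<le> x t" for t
    using assms(3) that by (meson atLeastLessThan_iff not_le)
  then show "ereal v \<le> Inf {ereal t |t. 0 \<le> t \<and> 1 \<le> x t}"
    by (auto intro: Inf_greatest)
qed

lemma hit_time_less_erealE: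
  assumes "hit_time x < ereal b"
  obtains t where "0 \<le> t" "t < b" "1 \<le> x t"
  using assms by (auto simp: hit_time_def Inf_less_iff)

lemma first_passage_exists:
  fixes x :: "real \<Rightarrow> real"
  assumes cont: "continuous_on {0..} x" and "0 \<le> v" "1 \<le> x v"
  obtains w where "0 \<le> w" "w \<le> v" "1 \<le> x w" "\<forall>t\<in>{0..<w}. x t < 1"
proof -
  define H where "H = {t \<in> {0..v}. 1 \<le> x t}"
  have "closed H"
    unfolding H_def
    by (rule continuous_on_closed_Collect_le[OF continuous_on_const continuous_on_subset[OF cont]]) auto
  moreover have "v \<in> H" "bdd_below H"
    using assms by (auto simp: H_def intro: bdd_belowI[of _ 0])
  ultimately have "Inf H \<in> H" "\<And>t. t \<in> H \<Longrightarrow> Inf H \<le> t"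
    by (auto intro: closed_contains_Inf cInf_lower)
  then show thesis
    by (intro that[of "Inf H"]) (force simp: H_def)+
qed

lemma hit_time_in_interval_iff:
  assumes cont: "continuous_on {0..} x" and "0 \<le> a"
  shows "hit_time x \<in> {ereal a<..<ereal b} \<longleftrightarrow> (\<exists>v\<in>{a<..<b}. 1 \<le> x v \<and> (\<forall>t\<in>{0..<v}. x t < 1))"
proof
  assume hit: "hit_time x \<in> {ereal a<..<ereal b}"
  then obtain t where "0 \<le> t" "1 \<le> x t"
    by (auto elim: hit_time_less_erealE)
  then obtain w where "0 \<le> w" "1 \<le> x w" "\<forall>t\<in>{0..<w}. x t < 1"
    using first_passage_exists[OF cont] by metis
  moreover from this have "hit_time x = ereal w"
    by (rule hit_time_eqI)
  ultimately show "\<exists>v\<in>{a<..<b}. 1 \<le> x v \<and> (\<forall>t\<in>{0..<v}. x t < 1)"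
    using hit by auto
next
  assume "\<exists>v\<in>{a<..<b}. 1 \<le> x v \<and> (\<forall>t\<in>{0..<v}. x t < 1)"
  then obtain v where "a < v" "v < b" "1 \<le> x v" "\<forall>t\<in>{0..<v}. x t < 1"
    by auto
  with \<open>0 \<le> a\<close> show "hit_time x \<in> {ereal a<..<ereal b}"
    using hit_time_eqI[of v x] by simp
qed

lemma first_passage_in_interval_iff:
  fixes x :: "real \<Rightarrow> real"
  assumes cont: "continuous_on {0..} x" and "0 \<le> a"
  shows "(\<exists>v\<in>{a<..<b}. 1 \<le> x v \<and> (\<forall>t\<in>{0..<v}. x t < 1)) \<longleftrightarrow>
           (\<forall>t\<in>{0..a}. x t < 1) \<and> (\<exists>v\<in>{a<..<b}. 1 \<le> x v)"
proof
  assume "\<exists>v\<in>{a<..<b}. 1 \<le> x v \<and> (\<forall>t\<in>{0..<v}. x t < 1)"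
  then obtain v where "a < v" "v < b" "1 \<le> x v" "\<forall>t\<in>{0..<v}. x t < 1"
    by auto
  then show "(\<forall>t\<in>{0..a}. x t < 1) \<and> (\<exists>v\<in>{a<..<b}. 1 \<le> x v)"
    by auto
next
  assume "(\<forall>t\<in>{0..a}. x t < 1) \<and> (\<exists>v\<in>{a<..<b}. 1 \<le> x v)"
  then obtain v where below: "\<forall>t\<in>{0..a}. x t < 1" and v: "a < v" "v < b" "1 \<le> x v"
    by auto
  obtain w where w: "0 \<le> w" "w \<le> v" "1 \<le> x w" "\<forall>t\<in>{0..<w}. x t < 1"
    using first_passage_exists[OF cont, of v] v \<open>0 \<le> a\<close> by auto
  have "a < w"
    using below w by force
  with v w show "\<exists>v\<in>{a<..<b}. 1 \<le> x v \<and> (\<forall>t\<in>{0..<v}. x t < 1)"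
    by auto
qed

lemma hit_time_in_interval_iff_below_then_above:
  fixes x :: "real \<Rightarrow> real"
  assumes cont: "continuous_on {0..} x" and "0 \<le> a"
  shows "hit_time x \<in> {ereal a<..<ereal b} \<longleftrightarrow> (\<forall>t\<in>{0..a}. x t < 1) \<and> (\<exists>v\<in>{a<..<b}. 1 \<le> x v)"
  using hit_time_in_interval_iff[OF assms] first_passage_in_interval_iff[OF assms] by simp

lemma sat_phi1_unfold:
  "sat L_p x T phi1 \<longleftrightarrow>
     (\<forall>s\<in>{1<..<2}. (\<exists>a\<in>{1<..<4}. 1 \<le> x (T + s + a)) \<and> (\<forall>a\<in>{1<..<3}. x (T + s + a) < 1))"
  by (auto simp: phi1_def p_def L_p_def not_le)

lemma sat_phi1_below:
  assumes "sat L_p x T phi1" and "t \<in> {T+2<..<T+5}"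
  shows "x t < 1"
proof -
  define s where "s = 1 + (t - T - 2) / 3"
  have "s \<in> {1<..<2}" "t - T - s \<in> {1<..<3}"
    using assms(2) by (auto simp: s_def field_simps)
  then show "x t < 1"
    using assms(1) unfolding sat_phi1_unfold by force
qed

lemma sat_phi1_above:
  assumes cont: "continuous_on {0..} x" and "0 \<le> T" and sat: "sat L_p x T phi1"
  shows "1 \<le> x (T + 5)"
proof (rule ccontr)
  assume "\<not> 1 \<le> x (T + 5)"
  moreover have "isCont x (T + 5)"
    using \<open>0 \<le> T\<close> by (intro continuous_on_interior[OF cont]) auto
  ultimately have "\<forall>\<^sub>F t in at (T + 5). x t < 1"
    by (intro order_tendstoD(2)) (auto simp: isCont_def)
  then obtain \<delta> where "\<delta> > 0" and near: "\<And>t. t \<noteq> T + 5 \<Longrightarrow> dist t (T + 5) < \<delta> \<Longrightarrow> x t < 1"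
    by (auto simp: eventually_at)
  define s where "s = 1 + min (\<delta> / 2) (1 / 2)"
  have "s \<in> {1<..<2}"
    using \<open>\<delta> > 0\<close> by (auto simp: s_def)
  then obtain a where a: "a \<in> {1<..<4}" "1 \<le> x (T + s + a)" and "\<forall>a\<in>{1<..<3}. x (T + s + a) < 1"
    using sat unfolding sat_phi1_unfold by blast
  then have "3 \<le> a"
    by force
  moreover have "T + s + a \<notin> {T+2<..<T+5}"
    using sat_phi1_below[OF sat] a(2) not_le by blast
  ultimately have "T + 5 \<le> T + s + a"
    using \<open>s \<in> {1<..<2}\<close> by auto
  moreover have "T + s + a < T + 5 + \<delta>"
    using a(1) \<open>\<delta> > 0\<close> by (auto simp: s_def)
  ultimately show False
    using near[of "T + s + a"] a(2) \<open>\<not> 1 \<le> x (T + 5)\<close>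
    by (cases "T + s + a = T + 5") (auto simp: dist_real_def)
qed

lemma sat_phi1_iff:
  assumes "continuous_on {0..} x" and "0 \<le> T"
  shows "sat L_p x T phi1 \<longleftrightarrow> 1 \<le> x (T + 5) \<and> (\<forall>t\<in>{T+2<..<T+5}. x t < 1)"
proof
  assume "sat L_p x T phi1"
  then show "1 \<le> x (T + 5) \<and> (\<forall>t\<in>{T+2<..<T+5}. x t < 1)"
    using sat_phi1_above[OF assms] sat_phi1_below by blast
next
  assume "1 \<le> x (T + 5) \<and> (\<forall>t\<in>{T+2<..<T+5}. x t < 1)"
  then show "sat L_p x T phi1"
    unfolding sat_phi1_unfold by (force intro: bexI[where x="5 - s" for s])
qed

lemma sat_psi_unfold:
  "sat L_p x 0 psi \<longleftrightarrow> x 0 < 1 \<and> (\<forall>t\<in>{0<..<8}. x t < 1) \<and>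
     (\<exists>s\<in>{1<..<2}. (\<exists>r\<in>{1<..<3}. sat L_p x (s + r) phi1) \<and> (\<forall>r\<in>{1<..<2}. \<not> sat L_p x (s + r) phi1)
        \<and> (\<forall>r\<in>{2<..<3}. \<not> sat L_p x (s + r) phi1))"
  by (auto simp: psi_def phi3_def phi2_def p_def L_p_def not_le)

lemma sat_psi_imp_first_passage:
  assumes cont: "continuous_on {0..} x" and "sat L_p x 0 psi"
  shows "\<exists>v\<in>{8<..<9}. 1 \<le> x v \<and> (\<forall>t\<in>{0..<v}. x t < 1)"
proof -
  obtain s r where "x 0 < 1" and below8: "\<forall>t\<in>{0<..<8}. x t < 1" and s: "s \<in> {1<..<2}"
    and r: "r \<in> {1<..<3}" "sat L_p x (s + r) phi1"
    and not_r: "\<forall>r\<in>{1<..<2} \<union> {2<..<3}. \<not> sat L_p x (s + r) phi1"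
    using assms(2) unfolding sat_psi_unfold by blast
  \<comment> \<open>\<open>phi2\<close> pins the time at which \<open>phi1\<close> holds to \<open>s + 2\<close>, so the first passage is at \<open>s + 7\<close>\<close>
  have "r = 2"
    using r not_r by force
  then have hit: "1 \<le> x (s + 7)" and below: "\<forall>t\<in>{s+4<..<s+7}. x t < 1"
    using sat_phi1_iff[OF cont, of "s + 2"] r s by (auto simp: add_ac)
  have "x t < 1" if "t \<in> {0..<s+7}" for t
  proof -
    have "t = 0 \<or> t \<in> {0<..<8} \<or> t \<in> {s+4<..<s+7}"
      using that s by auto
    then show ?thesis
      using \<open>x 0 < 1\<close> below8 below by blast
  qed
  with hit s show ?thesis
    by (intro bexI[of _ "s + 7"]) auto
qed

lemma first_passage_imp_sat_psi:
  assumes cont: "continuous_on {0..} x"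
    and v: "v \<in> {8<..<9}" "1 \<le> x v" and below: "\<forall>t\<in>{0..<v}. x t < 1"
  shows "sat L_p x 0 psi"
proof -
  note phi1 = sat_phi1_iff[OF cont]
  define s where "s = v - 7"
  have s: "s \<in> {1<..<2}"
    using v by (auto simp: s_def)
  have "sat L_p x (s + 2) phi1"
    using phi1[of "s + 2"] s v below by (auto simp: s_def)
  moreover have "\<not> sat L_p x (s + r) phi1" if "r \<in> {1<..<2}" for r
  proof -
    have "s + r + 5 \<in> {0..<v}"
      using s that by (auto simp: s_def)
    then have "x (s + r + 5) < 1"
      using below by blast
    then show ?thesis
      using phi1[of "s + r"] s that by auto
  qed
  moreover have "\<not> sat L_p x (s + r) phi1" if "r \<in> {2<..<3}" for r
  proof -
    have "v \<in> {s+r+2<..<s+r+5}"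
      using that by (auto simp: s_def)
    then show ?thesis
      using phi1[of "s + r"] s v by force
  qed
  moreover have "x t < 1" if "t \<in> {0..<8}" for t
    using below v that by auto
  ultimately show ?thesis
    unfolding sat_psi_unfold using s by (intro conjI bexI[of _ s] bexI[of _ "2::real"]) auto
qed

lemma sat_psi_iff:
  assumes "continuous_on {0..} x"
  shows "sat L_p x 0 psi \<longleftrightarrow> (\<exists>v\<in>{8<..<9}. 1 \<le> x v \<and> (\<forall>t\<in>{0..<v}. x t < 1))"
  using sat_psi_imp_first_passage[OF assms] first_passage_imp_sat_psi[OF assms] by blast

lemma sat_psi_iff_hit_time:
  assumes "continuous_on {0..} x"
  shows "sat L_p x 0 psi \<longleftrightarrow> hit_time x \<in> {ereal 8<..<ereal 9}"
  using sat_psi_iff[OF assms] hit_time_in_interval_iff[OF assms, of 8 9] by simp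

section \<open>Measurability of path events\<close>

lemma pred_countable_Ball:
  assumes "countable D" and "\<And>s. s \<in> D \<Longrightarrow> Measurable.pred M (P s)"
  shows "Measurable.pred M (\<lambda>\<omega>. \<forall>s\<in>D. P s \<omega>)"
proof (cases "D = {}")
  case False
  then have "(\<forall>s\<in>D. P s \<omega>) \<longleftrightarrow> (\<forall>i. P (from_nat_into D i) \<omega>)" for \<omega>
    using from_nat_into[OF False] from_nat_into_surj[OF assms(1)] by metis
  then show ?thesis
    using assms(2) from_nat_into[OF False] by simp
qed simp

lemma continuous_on_closure_less_iff:
  fixes x :: "real \<Rightarrow> real"
  assumes "compact (closure D)" and cont: "continuous_on (closure D) x"
  shows "(\<forall>t\<in>closure D. x t < c) \<longleftrightarrow> (\<exists>n. \<forall>t\<in>D. x t \<le> c - inverse (Suc n))"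
proof
  assume below: "\<forall>t\<in>closure D. x t < c"
  show "\<exists>n. \<forall>t\<in>D. x t \<le> c - inverse (Suc n)"
  proof (cases "D = {}")
    case False
    then obtain m where m: "m \<in> closure D" "\<forall>t\<in>closure D. x t \<le> x m"
      using continuous_attains_sup[OF assms(1) _ cont] by auto
    then obtain n where n: "inverse (Suc n) < c - x m"
      using below reals_Archimedean[of "c - x m"] by auto
    have "x t \<le> c - inverse (Suc n)" if "t \<in> D" for t
    proof -
      have "x t \<le> x m"
        using m(2) that closure_subset by blast
      with n show ?thesis
        by linarith
    qed
    then show ?thesis
      by blast
  qed simp
next
  assume "\<exists>n. \<forall>t\<in>D. x t \<le> c - inverse (Suc n)"
  then obtain n where n: "\<forall>t\<in>D. x t \<le> c - inverse (Suc n)"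
    by blast
  have "x t < c" if "t \<in> closure D" for t
  proof -
    have "x t \<le> c - inverse (Suc n)"
      using continuous_le_on_closure[OF cont that] n by blast
    moreover have "0 < inverse (real (Suc n))"
      by simp
    ultimately show ?thesis
      by linarith
  qed
  then show "\<forall>t\<in>closure D. x t < c"
    by blast
qed

lemma pred_less_on_closure:
  fixes X :: "real \<Rightarrow> 'w \<Rightarrow> real"
  assumes "countable D" "compact (closure D)"
    and cont: "\<And>\<omega>. \<omega> \<in> space M \<Longrightarrow> continuous_on (closure D) (\<lambda>t. X t \<omega>)"
    and meas: "\<And>t. t \<in> D \<Longrightarrow> X t \<in> borel_measurable M"
  shows "Measurable.pred M (\<lambda>\<omega>. \<forall>t\<in>closure D. X t \<omega> < c)"
proof -
  have "Measurable.pred M (\<lambda>\<omega>. \<exists>n::nat. \<forall>t\<in>D. X t \<omega> \<le> c - inverse (Suc n))"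
    using meas by (intro pred_intros_countable pred_countable_Ball[OF \<open>countable D\<close>]) measurable
  then show ?thesis
    by (rule measurable_cong[THEN iffD1, rotated])
       (simp add: continuous_on_closure_less_iff[OF assms(2) cont])
qed

definition dyadic_point :: "real \<Rightarrow> nat \<Rightarrow> nat \<Rightarrow> real" where
  "dyadic_point T n m = T * real m / 2 ^ n"

definition dyadic_grid :: "real \<Rightarrow> real set" where
  "dyadic_grid T = {dyadic_point T n m | n m. m \<le> 2 ^ n}"

lemma dyadic_point_refine: "dyadic_point T (n + d) (m * 2 ^ d) = dyadic_point T n m"
  by (simp add: dyadic_point_def power_add)

lemma dyadic_point_0 [simp]: "dyadic_point T n 0 = 0"
  and dyadic_point_top [simp]: "dyadic_point T n (2 ^ n) = T"
  by (simp_all add: dyadic_point_def)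

lemma dyadic_point_nonneg: "0 \<le> T \<Longrightarrow> 0 \<le> dyadic_point T n m"
  by (simp add: dyadic_point_def)

lemma dyadic_point_strict_mono: "0 < T \<Longrightarrow> a < b \<Longrightarrow> dyadic_point T n a < dyadic_point T n b"
  by (simp add: dyadic_point_def divide_strict_right_mono)

lemma dyadic_point_in_grid: "m \<le> 2 ^ n \<Longrightarrow> dyadic_point T n m \<in> dyadic_grid T"
  by (auto simp: dyadic_grid_def)

lemma dyadic_grid_nonneg: "0 \<le> T \<Longrightarrow> t \<in> dyadic_grid T \<Longrightarrow> 0 \<le> t"
  by (auto simp: dyadic_grid_def dyadic_point_nonneg)

lemma countable_dyadic_grid: "countable (dyadic_grid T)"
proof -
  have "dyadic_grid T \<subseteq> range (\<lambda>(n, m). dyadic_point T n m)"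
    by (auto simp: dyadic_grid_def)
  then show ?thesis
    by (rule countable_subset) simp
qed

lemma closure_dyadic_grid:
  assumes "0 < T"
  shows "closure (dyadic_grid T) = {0..T}"
proof -
  have "{real m / 2 ^ n | n m. m \<le> 2 ^ n} = {0..1} \<inter> (\<Union>k m. {real m / 2 ^ k})"
    by (auto simp: divide_le_eq_1) blast
  moreover have "dyadic_grid T = (*\<^sub>R) T ` {real m / 2 ^ n | n m. m \<le> 2 ^ n}"
    unfolding dyadic_grid_def dyadic_point_def by (force simp: image_iff)
  ultimately have "dyadic_grid T = (*\<^sub>R) T ` ({0..1} \<inter> (\<Union>k m. {real m / 2 ^ k}))"
    by simp
  then have "closure (dyadic_grid T) = (*\<^sub>R) T ` closure ({0..1} \<inter> (\<Union>k m. {real m / 2 ^ k}))"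
    by (metis closure_scaleR)
  also have "\<dots> = {0..T}"
    using assms by (subst closure_dyadic_rationals_in_convex_set_pos_1) auto
  finally show ?thesis .
qed

lemma pred_less_on_interval:
  fixes X :: "real \<Rightarrow> 'w \<Rightarrow> real"
  assumes "0 < T"
    and cont: "\<And>\<omega>. \<omega> \<in> space M \<Longrightarrow> continuous_on {0..T} (\<lambda>t. X t \<omega>)"
    and meas: "\<And>t. 0 \<le> t \<Longrightarrow> X t \<in> borel_measurable M"
  shows "Measurable.pred M (\<lambda>\<omega>. \<forall>t\<in>{0..T}. X t \<omega> < c)"
proof -
  have "dyadic_grid T \<subseteq> {0..T}"
    using closure_subset closure_dyadic_grid[OF \<open>0 < T\<close>] by blast
  then have "Measurable.pred M (\<lambda>\<omega>. \<forall>t\<in>closure (dyadic_grid T). X t \<omega> < c)"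
    by (intro pred_less_on_closure countable_dyadic_grid)
       (auto simp: closure_dyadic_grid[OF \<open>0 < T\<close>] intro!: cont meas)
  then show ?thesis
    by (simp add: closure_dyadic_grid[OF \<open>0 < T\<close>])
qed

lemma ex_above_in_interval_iff:
  fixes x :: "real \<Rightarrow> real"
  assumes "\<forall>t\<in>{0..a}. x t < 1" and "0 \<le> a"
  shows "(\<exists>v\<in>{a<..<b}. 1 \<le> x v) \<longleftrightarrow> (\<exists>n. a < b - inverse (Suc n) \<and> \<not> (\<forall>t\<in>{0..b - inverse (Suc n)}. x t < 1))"
proof
  assume "\<exists>v\<in>{a<..<b}. 1 \<le> x v"
  then obtain v where v: "a < v" "v < b" "1 \<le> x v"
    by auto
  then obtain n where "inverse (Suc n) < b - v"
    using reals_Archimedean[of "b - v"] by auto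
  with v assms show "\<exists>n. a < b - inverse (Suc n) \<and> \<not> (\<forall>t\<in>{0..b - inverse (Suc n)}. x t < 1)"
    by (intro exI[of _ n]) (auto intro!: bexI[of _ v])
next
  assume "\<exists>n. a < b - inverse (Suc n) \<and> \<not> (\<forall>t\<in>{0..b - inverse (Suc n)}. x t < 1)"
  then obtain n t where "0 \<le> t" "t \<le> b - inverse (Suc n)" "1 \<le> x t"
    by (auto simp: not_less)
  moreover have "0 < inverse (real (Suc n))"
    by simp
  ultimately have "t < b"
    by linarith
  moreover have "a < t"
  proof (rule ccontr)
    assume "\<not> a < t"
    then have "x t < 1"
      using assms(1) \<open>0 \<le> t\<close> by auto
    with \<open>1 \<le> x t\<close> show False
      by simp
  qed
  ultimately show "\<exists>v\<in>{a<..<b}. 1 \<le> x v"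
    using \<open>1 \<le> x t\<close> by auto
qed

lemma sets_hit_time_in_interval:
  fixes X :: "real \<Rightarrow> 'w \<Rightarrow> real"
  assumes meas: "\<And>t. 0 \<le> t \<Longrightarrow> X t \<in> borel_measurable M"
    and cont: "\<And>\<omega>. \<omega> \<in> space M \<Longrightarrow> continuous_on {0..} (\<lambda>t. X t \<omega>)" and "0 < a"
  shows "{\<omega> \<in> space M. hit_time (\<lambda>t. X t \<omega>) \<in> {ereal a<..<ereal b}} \<in> sets M"
proof -
  have cont_on: "continuous_on {0..T} (\<lambda>t. X t \<omega>)" if "\<omega> \<in> space M" for T \<omega>
    using cont[OF that] by (rule continuous_on_subset) auto
  have "Measurable.pred M (\<lambda>\<omega>. a < T \<and> \<not> (\<forall>t\<in>{0..T}. X t \<omega> < 1))" for T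
  proof (cases "a < T")
    case True
    have "Measurable.pred M (\<lambda>\<omega>. \<not> (\<forall>t\<in>{0..T}. X t \<omega> < 1))"
      using pred_less_on_interval[OF _ cont_on meas, of T 1] \<open>0 < a\<close> True by (intro pred_intros_logic(2)) simp
    with True show ?thesis
      by simp
  qed simp
  then have pred: "Measurable.pred M (\<lambda>\<omega>. (\<forall>t\<in>{0..a}. X t \<omega> < 1) \<and>
      (\<exists>n. a < b - inverse (Suc n) \<and> \<not> (\<forall>t\<in>{0..b - inverse (Suc n)}. X t \<omega> < 1)))"
    using pred_less_on_interval[OF \<open>0 < a\<close> cont_on meas] by measurable
  have eq: "hit_time (\<lambda>t. X t \<omega>) \<in> {ereal a<..<ereal b} \<longleftrightarrow> (\<forall>t\<in>{0..a}. X t \<omega> < 1) \<and>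
      (\<exists>n. a < b - inverse (Suc n) \<and> \<not> (\<forall>t\<in>{0..b - inverse (Suc n)}. X t \<omega> < 1))"
    if "\<omega> \<in> space M" for \<omega>
    using hit_time_in_interval_iff_below_then_above[OF cont[OF that] less_imp_le[OF \<open>0 < a\<close>]]
      ex_above_in_interval_iff[of a "\<lambda>t. X t \<omega>" b] \<open>0 < a\<close> by auto
  then have "{\<omega> \<in> space M. hit_time (\<lambda>t. X t \<omega>) \<in> {ereal a<..<ereal b}} = {\<omega> \<in> space M.
      (\<forall>t\<in>{0..a}. X t \<omega> < 1) \<and>
      (\<exists>n. a < b - inverse (Suc n) \<and> \<not> (\<forall>t\<in>{0..b - inverse (Suc n)}. X t \<omega> < 1))}"
    by blast
  with pred show ?thesis
    by (simp add: pred_def)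
qed

section \<open>Brownian increments and the modulus of continuity\<close>

lemma (in prob_space) prob_normal_le_0:
  assumes Z: "distributed M lborel Z (\<lambda>x. ennreal (normal_density 0 \<sigma> x))" and "0 < \<sigma>"
  shows "prob {\<omega> \<in> space M. Z \<omega> \<le> 0} = 1 / 2"
proof -
  have [measurable]: "Z \<in> borel_measurable M"
    using distributed_measurable[OF Z] by simp
  have neg_Z: "distributed M lborel (\<lambda>\<omega>. - Z \<omega>) (\<lambda>x. ennreal (normal_density 0 \<sigma> x))"
    using normal_density_affine[OF Z \<open>0 < \<sigma>\<close>, of "-1" 0] by simp
  have "emeasure M {\<omega> \<in> space M. Z \<omega> \<le> 0} = emeasure M {\<omega> \<in> space M. - Z \<omega> \<le> 0}"
    using distributed_emeasure[OF Z, of "{..0}"] distributed_emeasure[OF neg_Z, of "{..0}"]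
    by (simp add: vimage_def Int_def conj_commute)
  then have sym: "prob {\<omega> \<in> space M. Z \<omega> \<le> 0} = prob {\<omega> \<in> space M. 0 \<le> Z \<omega>}"
    by (simp add: measure_def)
  have "emeasure M (Z -` {0} \<inter> space M) = 0"
    using distributed_emeasure[OF Z, of "{0}"] nn_integral_null_set[of "{0}" lborel]
    by (simp add: countable_imp_null_set_lborel)
  moreover have "Z -` {0} \<inter> space M = {\<omega> \<in> space M. Z \<omega> = 0}"
    by auto
  ultimately have null: "{\<omega> \<in> space M. Z \<omega> = 0} \<in> null_sets M"
    by (intro null_setsI) auto
  have "prob {\<omega> \<in> space M. Z \<omega> \<le> 0} = prob ({\<omega> \<in> space M. Z \<omega> \<le> 0} - {\<omega> \<in> space M. Z \<omega> = 0})"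
    using null by (intro measure_Diff_null_set[symmetric]) measurable
  also have "\<dots> = prob (space M - {\<omega> \<in> space M. 0 \<le> Z \<omega>})"
    by (intro arg_cong[where f=prob]) auto
  also have "\<dots> = 1 - prob {\<omega> \<in> space M. Z \<omega> \<le> 0}"
    using sym by (subst prob_compl) measurable
  finally show ?thesis
    by simp
qed

lemma (in prob_space) prob_normal_greater_pos:
  assumes Z: "distributed M lborel Z (\<lambda>x. ennreal (normal_density 0 \<sigma> x))" and "0 < \<sigma>"
  shows "0 < prob {\<omega> \<in> space M. c < Z \<omega>}"
proof -
  have [measurable]: "Z \<in> borel_measurable M"
    using distributed_measurable[OF Z] by simp
  have "normal_density 0 \<sigma> x \<noteq> 0" for x
    using normal_density_pos[OF \<open>0 < \<sigma>\<close>, of 0 x] by linarith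
  then have "{c<..c + 1} \<subseteq> {x. normal_density 0 \<sigma> x * indicator {c<..} x \<noteq> 0}"
    by (auto simp: indicator_def)
  have "0 < emeasure lborel {c<..c + 1}"
    by simp
  also have "emeasure lborel {c<..c + 1} \<le> emeasure lborel {x. normal_density 0 \<sigma> x * indicator {c<..} x \<noteq> 0}"
    using \<open>{c<..c + 1} \<subseteq> _\<close> by (intro emeasure_mono) auto
  finally have "(\<integral>\<^sup>+x. ennreal (normal_density 0 \<sigma> x) * indicator {c<..} x \<partial>lborel) \<noteq> 0"
    by (subst nn_integral_0_iff_AE) (auto simp: AE_iff_measurable[OF _ refl] ennreal_mult'' indicator_def)
  then have "emeasure M {\<omega> \<in> space M. c < Z \<omega>} \<noteq> 0"
    using distributed_emeasure[OF Z, of "{c<..}"] by (simp add: vimage_def Int_def conj_commute)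
  then show ?thesis
    by (simp add: emeasure_eq_measure zero_less_measure_iff)
qed

lemma std_brownian_motionD:
  assumes "std_brownian_motion M X"
  shows std_brownian_motion_prob_space: "prob_space M"
    and std_brownian_motion_measurable: "\<And>t. 0 \<le> t \<Longrightarrow> X t \<in> borel_measurable M"
    and std_brownian_motion_start: "\<And>\<omega>. \<omega> \<in> space M \<Longrightarrow> X 0 \<omega> = 0"
    and std_brownian_motion_continuous: "\<And>\<omega>. \<omega> \<in> space M \<Longrightarrow> continuous_on {0..} (\<lambda>t. X t \<omega>)"
    and std_brownian_motion_increment: "\<And>s t. 0 \<le> s \<Longrightarrow> s < t \<Longrightarrow>
          distributed M lborel (\<lambda>\<omega>. X t \<omega> - X s \<omega>) (\<lambda>x. ennreal (normal_density 0 (sqrt (t - s)) x))"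
    and std_brownian_motion_indep_increments: "\<And>ts n. 0 \<le> ts 0 \<Longrightarrow> strict_mono ts \<Longrightarrow>
          prob_space.indep_vars M (\<lambda>_. borel) (\<lambda>i \<omega>. X (ts (Suc i)) \<omega> - X (ts i) \<omega>) {..<n}"
  using assms by (auto simp: std_brownian_motion_def)

definition oscillation_le :: "(real \<Rightarrow> real) \<Rightarrow> real set \<Rightarrow> real \<Rightarrow> real \<Rightarrow> bool" where
  "oscillation_le x D \<delta> \<epsilon> \<longleftrightarrow> (\<forall>s\<in>D. \<forall>t\<in>D. \<bar>s - t\<bar> \<le> \<delta> \<longrightarrow> \<bar>x s - x t\<bar> \<le> \<epsilon>)"

lemma oscillation_le_mono: "oscillation_le x D \<delta> \<epsilon> \<Longrightarrow> \<delta>' \<le> \<delta> \<Longrightarrow> oscillation_le x D \<delta>' \<epsilon>"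
  by (auto simp: oscillation_le_def)

lemma continuous_on_compact_oscillation_le:
  assumes "compact S" "continuous_on S x" "D \<subseteq> S" "0 < \<epsilon>"
  obtains \<delta> where "0 < \<delta>" "oscillation_le x D \<delta> \<epsilon>"
proof -
  obtain e where "0 < e" and e: "\<And>s t. s \<in> S \<Longrightarrow> t \<in> S \<Longrightarrow> dist s t < e \<Longrightarrow> dist (x s) (x t) < \<epsilon>"
    using compact_uniformly_continuous[OF assms(2,1)] \<open>0 < \<epsilon>\<close>
    unfolding uniformly_continuous_on_def by metis
  have "oscillation_le x D (e / 2) \<epsilon>"
    unfolding oscillation_le_def using e \<open>0 < e\<close> \<open>D \<subseteq> S\<close>
    by (force simp: dist_real_def intro: less_imp_le)
  with \<open>0 < e\<close> show thesis
    by (intro that[of "e / 2"]) auto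
qed

lemma pred_oscillation_le:
  assumes "countable D" and meas: "\<And>t. t \<in> D \<Longrightarrow> X t \<in> borel_measurable M"
  shows "Measurable.pred M (\<lambda>\<omega>. oscillation_le (\<lambda>t. X t \<omega>) D \<delta> \<epsilon>)"
  unfolding oscillation_le_def using meas
  by (intro pred_countable_Ball[OF \<open>countable D\<close>]) measurable

lemma (in prob_space) prob_oscillation_le_tendsto_1:
  assumes "countable D" "D \<subseteq> S" "compact S" "0 < \<epsilon>"
    and cont: "\<And>\<omega>. \<omega> \<in> space M \<Longrightarrow> continuous_on S (\<lambda>t. X t \<omega>)"
    and meas: "\<And>t. t \<in> D \<Longrightarrow> X t \<in> borel_measurable M"
  shows "(\<lambda>n. prob {\<omega> \<in> space M. oscillation_le (\<lambda>t. X t \<omega>) D (inverse (Suc n)) \<epsilon>}) \<longlonglongrightarrow> 1"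
proof -
  define V where "V n = {\<omega> \<in> space M. oscillation_le (\<lambda>t. X t \<omega>) D (inverse (Suc n)) \<epsilon>}" for n
  have V_sets: "range V \<subseteq> events"
    using pred_oscillation_le[OF \<open>countable D\<close> meas] by (auto simp: V_def pred_def)
  have "incseq V"
    by (rule incseq_SucI) (auto simp: V_def intro: oscillation_le_mono divide_left_mono)
  moreover have "(\<Union>n. V n) = space M"
  proof (intro equalityI subsetI)
    fix \<omega> assume "\<omega> \<in> space M"
    then obtain \<delta> where "0 < \<delta>" "oscillation_le (\<lambda>t. X t \<omega>) D \<delta> \<epsilon>"
      using continuous_on_compact_oscillation_le[OF \<open>compact S\<close> cont \<open>D \<subseteq> S\<close> \<open>0 < \<epsilon>\<close>] by metis
    moreover obtain n where "inverse (Suc n) < \<delta>"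
      using reals_Archimedean[OF \<open>0 < \<delta>\<close>] by blast
    ultimately show "\<omega> \<in> (\<Union>n. V n)"
      using \<open>\<omega> \<in> space M\<close> by (auto simp: V_def intro: oscillation_le_mono less_imp_le)
  qed (auto simp: V_def)
  ultimately show ?thesis
    using finite_Lim_measure_incseq[OF V_sets] prob_space unfolding V_def by simp
qed

lemma prob_oscillation_le_dyadic_gt:
  assumes BM: "std_brownian_motion M X" and "0 < T"
  obtains k where "3 / 4 < measure M {\<omega> \<in> space M. oscillation_le (\<lambda>t. X t \<omega>) (dyadic_grid T) (T / 2 ^ k) (1 / 2)}"
proof -
  interpret prob_space M
    using BM by (rule std_brownian_motion_prob_space)
  note meas = std_brownian_motion_measurable[OF BM]
  have grid_meas: "X t \<in> borel_measurable M" if "t \<in> dyadic_grid T" for t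
    using meas dyadic_grid_nonneg \<open>0 < T\<close> that by (meson less_imp_le)
  have "dyadic_grid T \<subseteq> {0..T}"
    using closure_subset closure_dyadic_grid[OF \<open>0 < T\<close>] by blast
  moreover have "continuous_on {0..T} (\<lambda>t. X t \<omega>)" if "\<omega> \<in> space M" for \<omega>
    using std_brownian_motion_continuous[OF BM that] by (rule continuous_on_subset) auto
  ultimately have "(\<lambda>n. prob {\<omega> \<in> space M. oscillation_le (\<lambda>t. X t \<omega>) (dyadic_grid T) (inverse (Suc n)) (1 / 2)}) \<longlonglongrightarrow> 1"
    by (intro prob_oscillation_le_tendsto_1 countable_dyadic_grid grid_meas) auto
  then have "\<forall>\<^sub>F n in sequentially. 3 / 4 < prob {\<omega> \<in> space M. oscillation_le (\<lambda>t. X t \<omega>) (dyadic_grid T) (inverse (Suc n)) (1 / 2)}"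
    by (rule order_tendstoD) simp
  then obtain n where n: "3 / 4 < prob {\<omega> \<in> space M. oscillation_le (\<lambda>t. X t \<omega>) (dyadic_grid T) (inverse (Suc n)) (1 / 2)}"
    by (auto simp: eventually_sequentially)
  obtain k where "T * Suc n < 2 ^ k"
    using real_arch_pow[of 2 "T * Suc n"] by auto
  then have "T / 2 ^ k \<le> inverse (Suc n)"
    by (simp add: field_simps)
  then have "prob {\<omega> \<in> space M. oscillation_le (\<lambda>t. X t \<omega>) (dyadic_grid T) (inverse (Suc n)) (1 / 2)}
      \<le> prob {\<omega> \<in> space M. oscillation_le (\<lambda>t. X t \<omega>) (dyadic_grid T) (T / 2 ^ k) (1 / 2)}"
    using pred_oscillation_le[OF countable_dyadic_grid grid_meas, where \<delta>="T / 2 ^ k" and \<epsilon>="1 / 2"]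
    by (intro finite_measure_mono) (auto simp: pred_def elim: oscillation_le_mono)
  with n show thesis
    by (intro that[of k]) linarith
qed

section \<open>Staying below 1 on \<open>[0, T]\<close> and ending above 1\<close>

text \<open>The \<open>j\<close>-th of the \<open>2^k\<close> blocks of \<open>[0, T]\<close>, observed at the dyadic points of level \<open>k + d\<close>.\<close>
definition tame_block :: "(real \<Rightarrow> real) \<Rightarrow> real \<Rightarrow> nat \<Rightarrow> nat \<Rightarrow> nat \<Rightarrow> bool" where
  "tame_block x T k d j \<longleftrightarrow>
     (\<forall>l\<le>2 ^ d. \<bar>x (dyadic_point T (k + d) (j * 2 ^ d + l)) - x (dyadic_point T k j)\<bar> \<le> 1 / 2) \<and>
     x (dyadic_point T k (Suc j)) \<le> x (dyadic_point T k j)"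

lemma tame_block_SucD: "tame_block x T k (Suc d) j \<Longrightarrow> tame_block x T k d j"
proof -
  have "dyadic_point T (k + Suc d) (j * 2 ^ Suc d + 2 * l) = dyadic_point T ((k + d) + 1) ((j * 2 ^ d + l) * 2 ^ 1)" for l
    by (rule arg_cong2[where f="dyadic_point T"]) (simp_all add: algebra_simps)
  then have "dyadic_point T (k + Suc d) (j * 2 ^ Suc d + 2 * l) = dyadic_point T (k + d) (j * 2 ^ d + l)" for l
    by (simp only: dyadic_point_refine)
  moreover assume "tame_block x T k (Suc d) j"
  ultimately show ?thesis
    unfolding tame_block_def by (metis mult_le_mono2 power_Suc)
qed

lemma tame_blocks_left_ends:
  assumes "x 0 = 0" and tame: "\<And>j. j < 2 ^ k \<Longrightarrow> tame_block x T k 0 j" and "j \<le> 2 ^ k"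
  shows "- (real j / 2) \<le> x (dyadic_point T k j) \<and> x (dyadic_point T k j) \<le> 0"
  using \<open>j \<le> 2 ^ k\<close>
proof (induction j)
  case (Suc j)
  then have "tame_block x T k 0 j"
    by (intro tame) simp
  then have "\<bar>x (dyadic_point T k (Suc j)) - x (dyadic_point T k j)\<bar> \<le> 1 / 2"
    and "x (dyadic_point T k (Suc j)) \<le> x (dyadic_point T k j)"
    unfolding tame_block_def by auto
  with Suc show ?case
    by (auto simp: abs_le_iff field_simps)
qed (simp add: \<open>x 0 = 0\<close>)

lemma tame_blocks_on_dyadic_grid:
  assumes "x 0 = 0" and tame: "\<And>d j. j < 2 ^ k \<Longrightarrow> tame_block x T k d j"
    and "m \<le> 2 ^ n"
  shows "x (dyadic_point T n m) \<le> 1 / 2"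
proof -
  define j l where "j = m * 2 ^ k div 2 ^ n" and "l = m * 2 ^ k mod 2 ^ n"
  have m: "m * 2 ^ k = j * 2 ^ n + l"
    by (simp add: j_def l_def div_mult_mod_eq)
  have point: "dyadic_point T n m = dyadic_point T (k + n) (j * 2 ^ n + l)"
    using dyadic_point_refine[where n=n and d=k and m=m] by (simp add: m add.commute)
  have left_end: "x (dyadic_point T k j) \<le> 0" if "j \<le> 2 ^ k"
    using tame_blocks_left_ends[OF \<open>x 0 = 0\<close> tame that] by simp
  show ?thesis
  proof (cases "j < 2 ^ k")
    case True
    moreover have "l \<le> 2 ^ n"
      unfolding l_def by (simp add: order_less_imp_le)
    ultimately have "\<bar>x (dyadic_point T (k + n) (j * 2 ^ n + l)) - x (dyadic_point T k j)\<bar> \<le> 1 / 2"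
      using tame[of j n] unfolding tame_block_def by blast
    then have "x (dyadic_point T (k + n) (j * 2 ^ n + l)) - x (dyadic_point T k j) \<le> 1 / 2"
      by (rule abs_le_D1)
    with left_end True show ?thesis
      unfolding point by linarith
  next
    case False
    have "j * 2 ^ n + l \<le> 2 ^ k * 2 ^ n"
      using \<open>m \<le> 2 ^ n\<close> unfolding m[symmetric] by simp
    moreover have "2 ^ k * 2 ^ n \<le> j * 2 ^ n"
      using False by simp
    ultimately have "l = 0" "j * 2 ^ n = 2 ^ k * 2 ^ n"
      by linarith+
    then have "j = 2 ^ k" "j * 2 ^ n + l = 2 ^ (k + n)"
      by (simp_all add: power_add)
    then show ?thesis
      using left_end unfolding point by simp
  qed
qed

lemma tame_blocks_below:
  assumes "0 < T" "continuous_on {0..T} x" "x 0 = 0"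
    and "\<And>d j. j < 2 ^ k \<Longrightarrow> tame_block x T k d j"
  shows "\<forall>t\<in>{0..T}. x t \<le> 1 / 2"
proof
  fix t assume "t \<in> {0..T}"
  moreover have "x s \<le> 1 / 2" if "s \<in> dyadic_grid T" for s
    using that tame_blocks_on_dyadic_grid[OF assms(3,4)] unfolding dyadic_grid_def by blast
  ultimately show "x t \<le> 1 / 2"
    using continuous_le_on_closure[where S="dyadic_grid T" and f=x and a="1 / 2"] assms(2)
    unfolding closure_dyadic_grid[OF \<open>0 < T\<close>] by blast
qed

lemma oscillation_le_imp_tame_block:
  assumes osc: "oscillation_le x (dyadic_grid T) (T / 2 ^ k) (1 / 2)"
    and descent: "x (dyadic_point T k (Suc j)) \<le> x (dyadic_point T k j)" and "j < 2 ^ k" "0 \<le> T"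
  shows "tame_block x T k d j"
  unfolding tame_block_def
proof (intro conjI allI impI descent)
  fix l :: nat assume "l \<le> 2 ^ d"
  have block_end: "j * 2 ^ d + l \<le> 2 ^ (k + d)"
    using mult_le_mono1[of "Suc j" "2 ^ k" "2 ^ d"] \<open>j < 2 ^ k\<close> \<open>l \<le> 2 ^ d\<close> by (simp add: power_add)
  have left_end: "dyadic_point T k j = dyadic_point T (k + d) (j * 2 ^ d)"
    by (simp add: dyadic_point_refine)
  have "\<bar>dyadic_point T (k + d) (j * 2 ^ d + l) - dyadic_point T (k + d) (j * 2 ^ d)\<bar> = T * l / 2 ^ (k + d)"
    using \<open>0 \<le> T\<close> by (simp add: dyadic_point_def algebra_simps add_divide_distrib)
  also have "\<dots> \<le> T * 2 ^ d / 2 ^ (k + d)"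
    using \<open>l \<le> 2 ^ d\<close> \<open>0 \<le> T\<close> by (intro divide_right_mono mult_left_mono) simp_all
  also have "\<dots> = T / 2 ^ k"
    by (simp add: power_add)
  finally have "\<bar>dyadic_point T (k + d) (j * 2 ^ d + l) - dyadic_point T (k + d) (j * 2 ^ d)\<bar> \<le> T / 2 ^ k" .
  moreover have "dyadic_point T (k + d) (j * 2 ^ d + l) \<in> dyadic_grid T"
    "dyadic_point T (k + d) (j * 2 ^ d) \<in> dyadic_grid T"
    using block_end by (simp_all add: dyadic_point_in_grid)
  ultimately show "\<bar>x (dyadic_point T (k + d) (j * 2 ^ d + l)) - x (dyadic_point T k j)\<bar> \<le> 1 / 2"
    using osc unfolding oscillation_le_def left_end by blast
qed

lemma pred_tame_block:
  assumes meas: "\<And>t. 0 \<le> t \<Longrightarrow> X t \<in> borel_measurable M" and "0 \<le> T"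
  shows "Measurable.pred M (\<lambda>\<omega>. tame_block (\<lambda>t. X t \<omega>) T k d j)"
proof -
  have [measurable]: "X (dyadic_point T n m) \<in> borel_measurable M" for n m
    using meas dyadic_point_nonneg[OF \<open>0 \<le> T\<close>] by blast
  show ?thesis
    unfolding tame_block_def by measurable
qed

lemma prob_tame_block_ge:
  assumes BM: "std_brownian_motion M X" and "0 < T" "j < 2 ^ k"
    and osc: "3 / 4 < measure M {\<omega> \<in> space M. oscillation_le (\<lambda>t. X t \<omega>) (dyadic_grid T) (T / 2 ^ k) (1 / 2)}"
  shows "1 / 4 \<le> measure M {\<omega> \<in> space M. tame_block (\<lambda>t. X t \<omega>) T k d j}"
proof -
  interpret prob_space M
    using BM by (rule std_brownian_motion_prob_space)
  note meas = std_brownian_motion_measurable[OF BM]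
  define V where "V = {\<omega> \<in> space M. oscillation_le (\<lambda>t. X t \<omega>) (dyadic_grid T) (T / 2 ^ k) (1 / 2)}"
  define A where "A = {\<omega> \<in> space M. X (dyadic_point T k (Suc j)) \<omega> - X (dyadic_point T k j) \<omega> \<le> 0}"
  define E where "E = {\<omega> \<in> space M. tame_block (\<lambda>t. X t \<omega>) T k d j}"
  have "0 \<le> dyadic_point T k j" "dyadic_point T k j < dyadic_point T k (Suc j)"
    using \<open>0 < T\<close> by (simp_all add: dyadic_point_strict_mono dyadic_point_nonneg)
  then have "prob A = 1 / 2"
    unfolding A_def using std_brownian_motion_increment[OF BM]
    by (intro prob_normal_le_0[where \<sigma>="sqrt (dyadic_point T k (Suc j) - dyadic_point T k j)"]) simp_all
  have "X t \<in> borel_measurable M" if "t \<in> dyadic_grid T" for t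
    using meas dyadic_grid_nonneg \<open>0 < T\<close> that by (meson less_imp_le)
  then have "V \<in> events"
    using pred_oscillation_le[OF countable_dyadic_grid] unfolding V_def pred_def by blast
  have [measurable]: "X (dyadic_point T k i) \<in> borel_measurable M" for i
    using meas dyadic_point_nonneg \<open>0 < T\<close> by (meson less_imp_le)
  have "A \<in> events"
    unfolding A_def by measurable
  have "E \<in> events"
    using pred_tame_block[OF meas] \<open>0 < T\<close> unfolding E_def pred_def by auto
  have "A \<inter> V \<subseteq> E"
    using oscillation_le_imp_tame_block[of "\<lambda>t. X t _" T k j d] \<open>j < 2 ^ k\<close> \<open>0 < T\<close>
    by (auto simp: A_def V_def E_def)
  have "prob A \<le> prob ((A \<inter> V) \<union> (space M - V))"
    using \<open>A \<in> events\<close> \<open>V \<in> events\<close> sets.sets_into_space by (intro finite_measure_mono) auto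
  also have "\<dots> \<le> prob (A \<inter> V) + prob (space M - V)"
    using \<open>A \<in> events\<close> \<open>V \<in> events\<close> by (intro measure_Un_le) auto
  also have "\<dots> \<le> prob E + (1 - prob V)"
    using finite_measure_mono[OF \<open>A \<inter> V \<subseteq> E\<close> \<open>E \<in> events\<close>] prob_compl[OF \<open>V \<in> events\<close>] by simp
  finally show ?thesis
    using \<open>prob A = 1 / 2\<close> osc unfolding E_def V_def by linarith
qed

lemma (in prob_space) prob_indep_blocks:
  assumes indep: "indep_vars (\<lambda>_. borel) Y I" and "finite J" "J \<noteq> {}"
    and "disjoint_family_on K J" "\<And>j. j \<in> J \<Longrightarrow> K j \<subseteq> I"
    and Q: "\<And>j. j \<in> J \<Longrightarrow> Q j \<in> measurable (Pi\<^sub>M (K j) (\<lambda>_. borel)) (count_space UNIV)"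
  shows "prob {\<omega> \<in> space M. \<forall>j\<in>J. Q j (restrict (\<lambda>i. Y i \<omega>) (K j))}
       = (\<Prod>j\<in>J. prob {\<omega> \<in> space M. Q j (restrict (\<lambda>i. Y i \<omega>) (K j))})"
proof -
  have "indep_vars (\<lambda>_. count_space UNIV) (\<lambda>j \<omega>. Q j (restrict (\<lambda>i. Y i \<omega>) (K j))) J"
    using indep_vars_compose2[OF indep_vars_restrict[OF indep assms(5,4)] Q] .
  from indep_varsD[OF this \<open>J \<noteq> {}\<close> \<open>finite J\<close> subset_refl, of "\<lambda>_. {True}"]
  have "prob (\<Inter>j\<in>J. {\<omega> \<in> space M. Q j (restrict (\<lambda>i. Y i \<omega>) (K j))})
      = (\<Prod>j\<in>J. prob {\<omega> \<in> space M. Q j (restrict (\<lambda>i. Y i \<omega>) (K j))})"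
    by (simp add: vimage_def Int_def conj_commute)
  moreover have "(\<Inter>j\<in>J. {\<omega> \<in> space M. Q j (restrict (\<lambda>i. Y i \<omega>) (K j))})
      = {\<omega> \<in> space M. \<forall>j\<in>J. Q j (restrict (\<lambda>i. Y i \<omega>) (K j))}"
    using \<open>J \<noteq> {}\<close> by auto
  ultimately show ?thesis
    by simp
qed

lemma disjoint_family_on_blocks: "disjoint_family_on (\<lambda>j. {j * b..<Suc j * b} \<inter> S) J"
  unfolding disjoint_family_on_def
proof (intro ballI impI equals0I)
  have index_le: "i \<le> j" if "i * b \<le> x" "x < Suc j * b" for i j x :: nat
  proof -
    have "i * b < Suc j * b"
      using that by linarith
    then show ?thesis
      by (simp only: mult_less_cancel2) simp
  qed
  fix i j x assume "i \<noteq> j" "x \<in> ({i * b..<Suc i * b} \<inter> S) \<inter> ({j * b..<Suc j * b} \<inter> S)"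
  then show False
    using index_le[of i x j] index_le[of j x i] by auto
qed

definition tame_increments :: "nat \<Rightarrow> nat \<Rightarrow> (nat \<Rightarrow> real) \<Rightarrow> bool" where
  "tame_increments a L f \<longleftrightarrow>
     (\<forall>l\<le>L. \<bar>\<Sum>i\<in>{a..<a + l}. f i\<bar> \<le> 1 / 2) \<and> (\<Sum>i\<in>{a..<a + L}. f i) \<le> 0"

lemma tame_increments_restrict:
  assumes "{a..<a + L} \<subseteq> K"
  shows "tame_increments a L (restrict f K) \<longleftrightarrow> tame_increments a L f"
proof -
  have "(\<Sum>i\<in>{a..<a + l}. restrict f K i) = (\<Sum>i\<in>{a..<a + l}. f i)" if "l \<le> L" for l
  proof -
    have "{a..<a + l} \<subseteq> K"
      using assms that by (auto simp: subset_iff)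
    then show ?thesis
      by (intro sum.cong) auto
  qed
  then show ?thesis
    unfolding tame_increments_def by (simp cong: imp_cong)
qed

lemma measurable_tame_increments:
  assumes "{a..<a + L} \<subseteq> K"
  shows "tame_increments a L \<in> measurable (Pi\<^sub>M K (\<lambda>_. borel)) (count_space UNIV)"
proof -
  have sum: "(\<lambda>f. \<Sum>i\<in>{a..<a + l}. f i :: real) \<in> borel_measurable (Pi\<^sub>M K (\<lambda>_. borel))" if "l \<le> L" for l
    using assms that by (intro borel_measurable_sum[where f="\<lambda>i f. f i"] measurable_component_singleton) auto
  have "Measurable.pred (Pi\<^sub>M K (\<lambda>_. borel)) (\<lambda>f. \<forall>l\<in>{..L}. \<bar>\<Sum>i\<in>{a..<a + l}. f i\<bar> \<le> (1 / 2 :: real))"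
    by (intro pred_intros_finite(3) pred_le_const[where N=borel] borel_measurable_abs sum) auto
  moreover have "Measurable.pred (Pi\<^sub>M K (\<lambda>_. borel)) (\<lambda>f. (\<Sum>i\<in>{a..<a + L}. f i) \<le> (0 :: real))"
    by (intro pred_le_const[where N=borel] sum) auto
  moreover have "tame_increments a L = (\<lambda>f. (\<forall>l\<in>{..L}. \<bar>\<Sum>i\<in>{a..<a + l}. f i\<bar> \<le> 1 / 2) \<and>
      (\<Sum>i\<in>{a..<a + L}. f i) \<le> 0)"
    by (auto simp: fun_eq_iff tame_increments_def)
  ultimately show ?thesis
    by (simp only:) (rule pred_intros_logic(3))
qed

lemma tame_block_iff_increments:
  assumes "j < 2 ^ k" and ts: "\<And>i. i \<le> 2 ^ (k + d) \<Longrightarrow> ts i = dyadic_point T (k + d) i"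
  shows "tame_block x T k d j \<longleftrightarrow> tame_increments (j * 2 ^ d) (2 ^ d) (\<lambda>i. x (ts (Suc i)) - x (ts i))"
proof -
  have block_end: "Suc j * 2 ^ d \<le> 2 ^ (k + d)"
    using mult_le_mono1[of "Suc j" "2 ^ k" "2 ^ d"] \<open>j < 2 ^ k\<close> by (simp add: power_add)
  have "(\<Sum>i\<in>{j * 2 ^ d..<j * 2 ^ d + l}. x (ts (Suc i)) - x (ts i))
      = x (dyadic_point T (k + d) (j * 2 ^ d + l)) - x (dyadic_point T k j)" if "l \<le> 2 ^ d" for l
  proof -
    have "(\<Sum>i\<in>{j * 2 ^ d..<j * 2 ^ d + l}. x (ts (Suc i)) - x (ts i))
        = x (ts (j * 2 ^ d + l)) - x (ts (j * 2 ^ d))"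
      by (rule sum_Suc_diff'[where f="\<lambda>i. x (ts i)"]) simp
    moreover have "j * 2 ^ d + l \<le> 2 ^ (k + d)"
      using block_end that by simp
    ultimately show ?thesis
      using dyadic_point_refine[of T k d j] by (simp add: ts)
  qed
  moreover have "dyadic_point T (k + d) (j * 2 ^ d + 2 ^ d) = dyadic_point T k (Suc j)"
    using dyadic_point_refine[of T k d "Suc j"] by (simp add: add.commute)
  ultimately show ?thesis
    unfolding tame_block_def tame_increments_def by (simp add: add.commute)
qed

definition dyadic_then_step :: "real \<Rightarrow> real \<Rightarrow> nat \<Rightarrow> nat \<Rightarrow> real" where
  "dyadic_then_step T h n i = (if i \<le> 2 ^ n then dyadic_point T n i else T + h * (real i - 2 ^ n))"

lemma strict_mono_dyadic_then_step:
  assumes "0 < T" "0 < h"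
  shows "strict_mono (dyadic_then_step T h n)"
  unfolding strict_mono_Suc_iff
proof
  fix i :: nat
  consider "Suc i \<le> 2 ^ n" | "i = 2 ^ n" | "2 ^ n < i"
    by linarith
  then show "dyadic_then_step T h n i < dyadic_then_step T h n (Suc i)"
    by cases (auto simp: dyadic_then_step_def dyadic_point_strict_mono assms)
qed

text \<open>Block \<open>j < 2^k\<close> collects the level \<open>k + d\<close> increments inside the \<open>j\<close>-th block of \<open>[0, T]\<close>;
  the index \<open>j = 2^k\<close> stands for the single increment from \<open>T\<close> to \<open>T + h\<close>.\<close>
definition increment_block :: "nat \<Rightarrow> nat \<Rightarrow> nat \<Rightarrow> nat set" where
  "increment_block k d j = {j * 2 ^ d..<Suc j * 2 ^ d} \<inter> {..2 ^ (k + d)}"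

definition block_test :: "nat \<Rightarrow> nat \<Rightarrow> real \<Rightarrow> nat \<Rightarrow> (nat \<Rightarrow> real) \<Rightarrow> bool" where
  "block_test k d c j = (if j < 2 ^ k then tame_increments (j * 2 ^ d) (2 ^ d) else (\<lambda>f. c < f (2 ^ (k + d))))"

lemma increment_block_less: "j < 2 ^ k \<Longrightarrow> increment_block k d j = {j * 2 ^ d..<j * 2 ^ d + 2 ^ d}"
  using mult_le_mono1[of "Suc j" "2 ^ k" "2 ^ d"] by (auto simp: increment_block_def power_add)

lemma increment_block_last: "increment_block k d (2 ^ k) = {2 ^ (k + d)}"
  by (auto simp: increment_block_def power_add)

lemma measurable_block_test:
  assumes "j \<le> 2 ^ k"
  shows "block_test k d c j \<in> measurable (Pi\<^sub>M (increment_block k d j) (\<lambda>_. borel)) (count_space UNIV)"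
proof (cases "j < 2 ^ k")
  case True
  then show ?thesis
    by (simp add: block_test_def increment_block_less measurable_tame_increments)
next
  case False
  with assms show ?thesis
    unfolding block_test_def by (simp, measurable, simp add: increment_block_last)
qed

lemma block_test_increments_iff:
  assumes "j \<le> 2 ^ k"
  shows "block_test k d c j (restrict (\<lambda>i. x (dyadic_then_step T h (k + d) (Suc i)) - x (dyadic_then_step T h (k + d) i))
      (increment_block k d j))
    \<longleftrightarrow> (if j < 2 ^ k then tame_block x T k d j else c < x (T + h) - x T)"
proof (cases "j < 2 ^ k")
  case True
  have "dyadic_then_step T h (k + d) i = dyadic_point T (k + d) i" if "i \<le> 2 ^ (k + d)" for i
    using that by (simp add: dyadic_then_step_def)
  then have "tame_block x T k d j \<longleftrightarrow> tame_increments (j * 2 ^ d) (2 ^ d)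
      (\<lambda>i. x (dyadic_then_step T h (k + d) (Suc i)) - x (dyadic_then_step T h (k + d) i))"
    by (rule tame_block_iff_increments[OF True])
  with True show ?thesis
    by (simp add: block_test_def increment_block_less tame_increments_restrict)
next
  case False
  with assms show ?thesis
    by (simp add: block_test_def increment_block_last dyadic_then_step_def)
qed

lemma prob_tame_blocks_eq_prod:
  assumes BM: "std_brownian_motion M X" and "0 < T" "0 < h"
  shows "measure M {\<omega> \<in> space M. (\<forall>j<2 ^ k. tame_block (\<lambda>t. X t \<omega>) T k d j) \<and> c < X (T + h) \<omega> - X T \<omega>}
       = (\<Prod>j<2 ^ k. measure M {\<omega> \<in> space M. tame_block (\<lambda>t. X t \<omega>) T k d j})
         * measure M {\<omega> \<in> space M. c < X (T + h) \<omega> - X T \<omega>}"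
proof -
  interpret prob_space M
    using BM by (rule std_brownian_motion_prob_space)
  define ts where "ts = dyadic_then_step T h (k + d)"
  define E where "E j \<omega> \<longleftrightarrow> (if j < 2 ^ k then tame_block (\<lambda>t. X t \<omega>) T k d j else c < X (T + h) \<omega> - X T \<omega>)"
    for j \<omega>
  have "ts 0 = 0"
    by (simp add: ts_def dyadic_then_step_def)
  then have indep: "indep_vars (\<lambda>_. borel) (\<lambda>i \<omega>. X (ts (Suc i)) \<omega> - X (ts i) \<omega>) {..<Suc (2 ^ (k + d))}"
    using std_brownian_motion_indep_increments[OF BM] strict_mono_dyadic_then_step[OF \<open>0 < T\<close> \<open>0 < h\<close>]
    unfolding ts_def by simp
  have E: "block_test k d c j (restrict (\<lambda>i. X (ts (Suc i)) \<omega> - X (ts i) \<omega>) (increment_block k d j)) \<longleftrightarrow> E j \<omega>"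
    if "j \<le> 2 ^ k" for j \<omega>
    using block_test_increments_iff[OF that, where x="\<lambda>t. X t \<omega>" and T=T and h=h and c=c and d=d]
    by (simp add: ts_def E_def)
  have "prob {\<omega> \<in> space M. \<forall>j\<in>{..2 ^ k}. E j \<omega>}
      = prob {\<omega> \<in> space M. \<forall>j\<in>{..2 ^ k}.
          block_test k d c j (restrict (\<lambda>i. X (ts (Suc i)) \<omega> - X (ts i) \<omega>) (increment_block k d j))}"
    using E by simp
  also have "\<dots> = (\<Prod>j\<in>{..2 ^ k}. prob {\<omega> \<in> space M.
      block_test k d c j (restrict (\<lambda>i. X (ts (Suc i)) \<omega> - X (ts i) \<omega>) (increment_block k d j))})"
    using disjoint_family_on_blocks[of "2 ^ d" "{..2 ^ (k + d)}" "{..2 ^ k}"] measurable_block_test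
    by (intro prob_indep_blocks[OF indep]) (auto simp: increment_block_def)
  also have "\<dots> = (\<Prod>j\<in>{..2 ^ k}. prob {\<omega> \<in> space M. E j \<omega>})"
    using E by (intro prod.cong) simp_all
  finally have "prob {\<omega> \<in> space M. \<forall>j\<in>{..2 ^ k}. E j \<omega>} = (\<Prod>j\<in>{..2 ^ k}. prob {\<omega> \<in> space M. E j \<omega>})" .
  moreover have "(\<forall>j\<in>{..2 ^ k}. E j \<omega>) \<longleftrightarrow> (\<forall>j<2 ^ k. tame_block (\<lambda>t. X t \<omega>) T k d j) \<and> c < X (T + h) \<omega> - X T \<omega>"
    for \<omega>
    by (auto simp: E_def less_Suc_eq_le[symmetric] less_Suc_eq)
  ultimately show ?thesis
    by (simp add: lessThan_Suc_atMost[symmetric] E_def)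
qed

lemma prob_tame_blocks_ge:
  assumes BM: "std_brownian_motion M X" and "0 < T" "0 < h"
    and osc: "3 / 4 < measure M {\<omega> \<in> space M. oscillation_le (\<lambda>t. X t \<omega>) (dyadic_grid T) (T / 2 ^ k) (1 / 2)}"
  shows "(1 / 4) ^ 2 ^ k * measure M {\<omega> \<in> space M. c < X (T + h) \<omega> - X T \<omega>}
    \<le> measure M {\<omega> \<in> space M. (\<forall>j<2 ^ k. tame_block (\<lambda>t. X t \<omega>) T k d j) \<and> c < X (T + h) \<omega> - X T \<omega>}"
proof -
  have "(\<Prod>j<(2::nat) ^ k. 1 / 4 :: real) \<le> (\<Prod>j<2 ^ k. measure M {\<omega> \<in> space M. tame_block (\<lambda>t. X t \<omega>) T k d j})"
    using prob_tame_block_ge[OF BM \<open>0 < T\<close> _ osc] by (intro prod_mono) auto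
  then show ?thesis
    unfolding prob_tame_blocks_eq_prod[OF BM \<open>0 < T\<close> \<open>0 < h\<close>] by (simp add: mult_right_mono)
qed

lemma tame_blocks_below_then_above:
  assumes "0 < T" "continuous_on {0..T} x" "x 0 = 0"
    and tame: "\<And>d j. j < 2 ^ k \<Longrightarrow> tame_block x T k d j" and rise: "1 + 2 ^ k / 2 < x (T + h) - x T"
  shows "(\<forall>t\<in>{0..T}. x t < 1) \<and> 1 \<le> x (T + h)"
proof
  show "\<forall>t\<in>{0..T}. x t < 1"
    using tame_blocks_below[OF assms(1-3) tame] by fastforce
  have "- (2 ^ k / 2) \<le> x T"
    using tame_blocks_left_ends[where j="2 ^ k", OF \<open>x 0 = 0\<close> tame] by simp
  with rise show "1 \<le> x (T + h)"
    by simp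
qed

lemma prob_below_then_above_pos:
  assumes BM: "std_brownian_motion M X" and "0 < T" "0 < h"
  shows "0 < measure M {\<omega> \<in> space M. (\<forall>t\<in>{0..T}. X t \<omega> < 1) \<and> 1 \<le> X (T + h) \<omega>}"
proof -
  interpret prob_space M
    using BM by (rule std_brownian_motion_prob_space)
  note meas = std_brownian_motion_measurable[OF BM]
  have cont: "continuous_on {0..T} (\<lambda>t. X t \<omega>)" if "\<omega> \<in> space M" for \<omega>
    using std_brownian_motion_continuous[OF BM that] by (rule continuous_on_subset) auto
  obtain k where osc: "3 / 4 < prob {\<omega> \<in> space M. oscillation_le (\<lambda>t. X t \<omega>) (dyadic_grid T) (T / 2 ^ k) (1 / 2)}"
    using prob_oscillation_le_dyadic_gt[OF BM \<open>0 < T\<close>] by blast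
  define c :: real where "c = 1 + 2 ^ k / 2"
  define G where "G d = {\<omega> \<in> space M. (\<forall>j<2 ^ k. tame_block (\<lambda>t. X t \<omega>) T k d j) \<and> c < X (T + h) \<omega> - X T \<omega>}"
    for d
  define p where "p = (1 / 4) ^ 2 ^ k * prob {\<omega> \<in> space M. c < X (T + h) \<omega> - X T \<omega>}"
  have "0 < p"
    unfolding p_def using std_brownian_motion_increment[OF BM, of T "T + h"] \<open>0 < T\<close> \<open>0 < h\<close>
    by (simp add: prob_normal_greater_pos[where \<sigma>="sqrt h"])
  have [measurable]: "X T \<in> borel_measurable M" "X (T + h) \<in> borel_measurable M"
      "Measurable.pred M (\<lambda>\<omega>. tame_block (\<lambda>t. X t \<omega>) T k d j)"
      "Measurable.pred M (\<lambda>\<omega>. \<forall>t\<in>{0..T}. X t \<omega> < 1)" for d j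
    using meas pred_tame_block[OF meas] pred_less_on_interval[OF \<open>0 < T\<close> cont meas] \<open>0 < T\<close> \<open>0 < h\<close>
    by simp_all
  have "decseq G"
    by (rule decseq_SucI) (auto simp: G_def intro: tame_block_SucD)
  moreover have "range G \<subseteq> events"
    by (auto simp: G_def)
  ultimately have "(\<lambda>d. prob (G d)) \<longlonglongrightarrow> prob (\<Inter>d. G d)"
    by (intro finite_Lim_measure_decseq)
  then have "p \<le> prob (\<Inter>d. G d)"
    using prob_tame_blocks_ge[OF BM \<open>0 < T\<close> \<open>0 < h\<close> osc] unfolding p_def G_def
    by (intro LIMSEQ_le_const) auto
  also have "\<dots> \<le> prob {\<omega> \<in> space M. (\<forall>t\<in>{0..T}. X t \<omega> < 1) \<and> 1 \<le> X (T + h) \<omega>}"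
  proof (rule finite_measure_mono)
    show "(\<Inter>d. G d) \<subseteq> {\<omega> \<in> space M. (\<forall>t\<in>{0..T}. X t \<omega> < 1) \<and> 1 \<le> X (T + h) \<omega>}"
    proof
      fix \<omega> assume "\<omega> \<in> (\<Inter>d. G d)"
      then have \<omega>: "\<omega> \<in> space M" and "\<And>d j. j < 2 ^ k \<Longrightarrow> tame_block (\<lambda>t. X t \<omega>) T k d j"
        and "1 + 2 ^ k / 2 < X (T + h) \<omega> - X T \<omega>"
        by (auto simp: G_def c_def)
      then have "(\<forall>t\<in>{0..T}. X t \<omega> < 1) \<and> 1 \<le> X (T + h) \<omega>"
        by (intro tame_blocks_below_then_above[OF \<open>0 < T\<close> cont[OF \<omega>] std_brownian_motion_start[OF BM \<omega>]])
      with \<omega> show "\<omega> \<in> {\<omega> \<in> space M. (\<forall>t\<in>{0..T}. X t \<omega> < 1) \<and> 1 \<le> X (T + h) \<omega>}"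
        by simp
    qed
  qed measurable
  finally show ?thesis
    using \<open>0 < p\<close> by linarith
qed

theorem lemma5p3:
  fixes M :: "'w measure" and X :: "real \<Rightarrow> 'w \<Rightarrow> real"
  assumes "std_brownian_motion M X"
  shows "(AE \<omega> in M. sat L_p (\<lambda>t. X t \<omega>) 0 psi \<longleftrightarrow>
                       hit_time (\<lambda>t. X t \<omega>) \<in> {ereal 8<..<ereal 9})
       \<and> measure M {\<omega> \<in> space M. sat L_p (\<lambda>t. X t \<omega>) 0 psi} > 0"
proof
  interpret prob_space M
    using assms by (rule std_brownian_motion_prob_space)
  note cont = std_brownian_motion_continuous[OF assms]
  have psi: "{\<omega> \<in> space M. sat L_p (\<lambda>t. X t \<omega>) 0 psi} = {\<omega> \<in> space M. hit_time (\<lambda>t. X t \<omega>) \<in> {ereal 8<..<ereal 9}}"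
    using sat_psi_iff_hit_time[OF cont] by blast
  then show "AE \<omega> in M. sat L_p (\<lambda>t. X t \<omega>) 0 psi \<longleftrightarrow> hit_time (\<lambda>t. X t \<omega>) \<in> {ereal 8<..<ereal 9}"
    by (intro AE_I2) blast
  have "{\<omega> \<in> space M. (\<forall>t\<in>{0..8}. X t \<omega> < 1) \<and> 1 \<le> X (8 + 1 / 2) \<omega>} \<subseteq> {\<omega> \<in> space M. sat L_p (\<lambda>t. X t \<omega>) 0 psi}"
    unfolding psi using hit_time_in_interval_iff_below_then_above[OF cont, of _ 8 9] by force
  moreover have "{\<omega> \<in> space M. sat L_p (\<lambda>t. X t \<omega>) 0 psi} \<in> events"
    unfolding psi by (intro sets_hit_time_in_interval std_brownian_motion_measurable[OF assms] cont) auto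
  ultimately have "prob {\<omega> \<in> space M. (\<forall>t\<in>{0..8}. X t \<omega> < 1) \<and> 1 \<le> X (8 + 1 / 2) \<omega>}
      \<le> prob {\<omega> \<in> space M. sat L_p (\<lambda>t. X t \<omega>) 0 psi}"
    by (rule finite_measure_mono)
  moreover have "0 < prob {\<omega> \<in> space M. (\<forall>t\<in>{0..8}. X t \<omega> < 1) \<and> 1 \<le> X (8 + 1 / 2) \<omega>}"
    by (rule prob_below_then_above_pos[OF assms]) simp_all
  ultimately show "0 < prob {\<omega> \<in> space M. sat L_p (\<lambda>t. X t \<omega>) 0 psi}"
    by linarith
qed

end
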